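(* Fix constants $B>0$, $1\le\Gamma\le 3$, $0<\kappa\le 1$, and Riemann data $\varrho_l>0$, $\varrho_r>0$, $\upsilon_l,\upsilon_r\ge0$ with $\upsilon_r\le\upsilon_l-\frac{B}{\varrho_l^{\kappa}}$. For $a>0$, $A>0$ (with $a<1/\max(\varrho_l,\varrho_r)$) let $p(\varrho)=A\left(\frac{\varrho}{1-a\varrho}\right)^{\Gamma}-\frac{B}{\varrho^{\kappa}}$ and let $(\varrho_a,\upsilon_a)$ be the shock-plus-contact-discontinuity Riemann solution of $$\varrho_t+(\varrho\upsilon)_x=0,\qquad (\varrho(\upsilon+p))_t+(\varrho\upsilon(\upsilon+p))_x=0,$$ with $(\varrho,\upsilon)(x,0)=(\varrho_l,\upsilon_l)$ for $x<0$ and $(\varrho_r,\upsilon_r)$ for $x>0$, namely, with $\zeta=x/t$, $$(\varrho_a,\upsilon_a)(\zeta)=\begin{cases}(\varrho_l,\upsilon_l),&\zeta<\sigma_1,\\ (\varrho_*,\upsilon_r),&\sigma_1<\zeta<\sigma_2,\\ (\varrho_r,\upsilon_r),&\zeta>\sigma_2,\end{cases}$$ where $\varrho_*\in(\varrho_l,1/a)$ solves $\upsilon_r=-p(\varrho_* )+\upsilon_l+p(\varrho_l)$, $\sigma_1=\upsilon_l-\frac{\varrho_*(p(\varrho_* )-p(\varrho_l))}{\varrho_*-\varrho_l}$ and $\sigma_2=\upsilon_r$. Then $$\lim_{a,A\to0}\upsilon_a(x,t)=\begin{cases}\upsilon_l,&x<\upsilon_r t,\\ \upsilon_r,&x=\upsilon_r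 t,\\ \upsilon_r,&x>\upsilon_r t,\end{cases}$$ and $\varrho_a$ converges in the sense of distributions to the sum of a step function and a Dirac delta measure supported on the line $x=\upsilon_r t$ with weight $w(t)=\varrho_l(\upsilon_l-\upsilon_r)t$: for every $\psi\in C_0^\infty(\mathbb{R}\times\mathbb{R}^+)$, $$\lim_{a,A\to0}\int_0^{\infty}\!\!\int_{-\infty}^{\infty}\varrho_a(x/t)\psi(x,t)\,dx\,dt=\int_0^\infty \varrho_l(\upsilon_l-\upsilon_r)t\,\psi(\upsilon_r t,t)\,dt+\int_0^\infty\!\!\int_{-\infty}^{\infty}H(x-\upsilon_r t)\psi(x,t)\,dx\,dt,$$ where $H(y)=\varrho_l$ for $y<0$ and $H(y)=\varrho_r$ for $y>0$.
   Context: The limit $a,A\to0$ is taken with $B,\Gamma,\kappa$ and the Riemann data fixed. In this situation the shock connects $(\varrho_l,\upsilon_l)$ to the intermediate state $(\varrho_*,\upsilon_r)$ (with $\varrho_*>\varrho_l$) and the contact discontinuity connects $(\varrho_*,\upsilon_r)$ to $(\varrho_r,\upsilon_r)$. *)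

theory Defs
  imports "HOL-Analysis.Analysis"
begin

definition pres :: "real \<Rightarrow> real \<Rightarrow> real \<Rightarrow> real \<Rightarrow> real \<Rightarrow> real \<Rightarrow> real" where
  "pres a A B \<Gamma> \<kappa> \<rho> = A * (\<rho> / (1 - a * \<rho>)) powr \<Gamma> - B / \<rho> powr \<kappa>"

definition rho_star :: "real \<Rightarrow> real \<Rightarrow> real \<Rightarrow> real \<Rightarrow> real \<Rightarrow> real \<Rightarrow> real \<Rightarrow> real \<Rightarrow> real" where
  "rho_star a A B \<Gamma> \<kappa> \<rho>l \<upsilon>l \<upsilon>r =
     (THE r. \<rho>l < r \<and> r < 1 / a \<and>
        \<upsilon>r = - pres a A B \<Gamma> \<kappa> r + \<upsilon>l + pres a A B \<Gamma> \<kappa> \<rho>l)"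

definition sigma1 :: "real \<Rightarrow> real \<Rightarrow> real \<Rightarrow> real \<Rightarrow> real \<Rightarrow> real \<Rightarrow> real \<Rightarrow> real \<Rightarrow> real" where
  "sigma1 a A B \<Gamma> \<kappa> \<rho>l \<upsilon>l \<upsilon>r =
     (let r = rho_star a A B \<Gamma> \<kappa> \<rho>l \<upsilon>l \<upsilon>r in
      \<upsilon>l - r * (pres a A B \<Gamma> \<kappa> r - pres a A B \<Gamma> \<kappa> \<rho>l) / (r - \<rho>l))"

text \<open>Values on the
  discontinuity lines (zeta = sigma_1, sigma_2) are fixed by a convention; the
  velocity equals v_r on both sides of sigma_2, so it is v_r there.\<close>
definition rho_sol :: "real \<Rightarrow> real \<Rightarrow> real \<Rightarrow> real \<Rightarrow> real \<Rightarrow> real \<Rightarrow> real \<Rightarrow> real \<Rightarrow> real \<Rightarrow> real \<Rightarrow> real" where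
  "rho_sol a A B \<Gamma> \<kappa> \<rho>l \<upsilon>l \<rho>r \<upsilon>r \<zeta> =
     (if \<zeta> < sigma1 a A B \<Gamma> \<kappa> \<rho>l \<upsilon>l \<upsilon>r then \<rho>l
      else if \<zeta> < \<upsilon>r then rho_star a A B \<Gamma> \<kappa> \<rho>l \<upsilon>l \<upsilon>r
      else \<rho>r)"

definition v_sol :: "real \<Rightarrow> real \<Rightarrow> real \<Rightarrow> real \<Rightarrow> real \<Rightarrow> real \<Rightarrow> real \<Rightarrow> real \<Rightarrow> real \<Rightarrow> real" where
  "v_sol a A B \<Gamma> \<kappa> \<rho>l \<upsilon>l \<upsilon>r \<zeta> =
     (if \<zeta> < sigma1 a A B \<Gamma> \<kappa> \<rho>l \<upsilon>l \<upsilon>r then \<upsilon>l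
      else if \<zeta> < \<upsilon>r then \<upsilon>r
      else \<upsilon>r)"

primrec Ck2 :: "nat \<Rightarrow> (real \<times> real \<Rightarrow> real) \<Rightarrow> bool" where
  "Ck2 0 f = continuous_on UNIV f"
| "Ck2 (Suc k) f = (\<exists>fx ft. (\<forall>z. (f has_derivative (\<lambda>h. fst h * fx z + snd h * ft z)) (at z))
                          \<and> Ck2 k fx \<and> Ck2 k ft)"

definition smooth2 :: "(real \<times> real \<Rightarrow> real) \<Rightarrow> bool" where
  "smooth2 f = (\<forall>k. Ck2 k f)"

definition test_fun :: "(real \<times> real \<Rightarrow> real) \<Rightarrow> bool" where
  "test_fun \<psi> = (smooth2 \<psi> \<and> compact (closure {z. \<psi> z \<noteq> 0})
                   \<and> closure {z. \<psi> z \<noteq> 0} \<subseteq> UNIV \<times> {0<..})"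

end

theory Submission
  imports Defs
begin

text \<open>
  The pressure p is strictly increasing on (0, 1/a) and unbounded near 1/a, so the intermediate
  density rho_star is the unique root of p(rho_star) = p(rho_l) + (v_l - v_r).  The hypothesis
  v_l - v_r >= B / rho_l^kappa makes p(rho_star) >= 0, whereas p(M) tends to -B / M^kappa < 0
  for every fixed M as a, A -> 0; hence rho_star -> infinity.  The Rankine-Hugoniot relation
  (rho_star - rho_l)(v_r - sigma_1) = rho_l (v_l - v_r) then shows that sigma_1 increases to
  v_r, which gives the velocity limit.  For the density, subtracting the step function H leaves
  rho_l (v_l - v_r) times the mean of psi over the wedge sigma_1 t <= x < v_r t, relative to
  its width v_r - sigma_1 -> 0; by uniform continuity of psi this mean tends to the integral
  of t psi(v_r t, t) over t > 0.
\<close>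

section \<open>The intermediate state\<close>

lemma mult_less_one_le_mono:
  fixes a r s :: real
  assumes "0 \<le> r" "r \<le> s" "a * s < 1"
  shows "a * r < 1"
  using assms mult_left_mono[of r s a] mult_nonpos_nonneg[of a r]
  by (cases "0 \<le> a") auto

lemma pres_strict_mono:
  assumes "0 < A" "0 \<le> B" "0 < \<Gamma>" "0 \<le> \<kappa>" "0 < r1" "r1 < r2" "a * r2 < 1"
  shows "pres a A B \<Gamma> \<kappa> r1 < pres a A B \<Gamma> \<kappa> r2"
proof -
  have "a * r1 < 1"
    using assms by (intro mult_less_one_le_mono[of r1 r2]) auto
  then have "r1 / (1 - a * r1) < r2 / (1 - a * r2)"
    using assms by (simp add: field_simps)
  then have "A * (r1 / (1 - a * r1)) powr \<Gamma> < A * (r2 / (1 - a * r2)) powr \<Gamma>"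
    using assms \<open>a * r1 < 1\<close> by (simp add: powr_less_mono2)
  moreover have "B / r2 powr \<kappa> \<le> B / r1 powr \<kappa>"
    using assms by (intro divide_left_mono powr_mono2) auto
  ultimately show ?thesis
    unfolding pres_def by linarith
qed

lemma continuous_on_pres:
  assumes "0 < lo" "a * hi < 1"
  shows "continuous_on {lo..hi} (pres a A B \<Gamma> \<kappa>)"
proof -
  have "0 < 1 - a * r" if "lo \<le> r" "r \<le> hi" for r
    using mult_less_one_le_mono[of r hi a] that assms by linarith
  then show ?thesis
    unfolding pres_def using assms by (intro continuous_intros) force+
qed

lemma ex_pres_ge:
  assumes "0 < a" "0 < A" "0 \<le> B" "0 < \<Gamma>" "0 \<le> \<kappa>" "0 < \<rho>l" "a * \<rho>l < 1"
  obtains r where "\<rho>l \<le> r" "a * r < 1" "y \<le> pres a A B \<Gamma> \<kappa> r"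
proof -
  define m where "m = max 0 ((y + B / \<rho>l powr \<kappa>) / A)"
  define q where "q = max (\<rho>l / (1 - a * \<rho>l)) (m powr (1 / \<Gamma>))"
  define r where "r = q / (1 + a * q)"
  have "\<rho>l / (1 - a * \<rho>l) \<le> q"
    unfolding q_def by simp
  then have "\<rho>l \<le> q * (1 - a * \<rho>l)" "0 < q"
    using assms by (auto simp: field_simps intro: less_le_trans[of 0 "\<rho>l / (1 - a * \<rho>l)"])
  moreover from \<open>0 < q\<close> have "0 < 1 + a * q"
    using assms by (simp add: add_pos_pos)
  ultimately have "\<rho>l \<le> r" "a * r < 1" "r / (1 - a * r) = q"
    unfolding r_def by (simp_all add: field_simps)
  have "m \<le> q powr \<Gamma>"
  proof -
    have "m = (m powr (1 / \<Gamma>)) powr \<Gamma>"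
      using assms by (simp add: powr_powr m_def)
    also have "\<dots> \<le> q powr \<Gamma>"
      using assms by (intro powr_mono2) (auto simp: q_def)
    finally show ?thesis .
  qed
  then have "y + B / \<rho>l powr \<kappa> \<le> A * q powr \<Gamma>"
    using assms by (simp add: m_def field_simps)
  moreover have "B / r powr \<kappa> \<le> B / \<rho>l powr \<kappa>"
    using assms \<open>\<rho>l \<le> r\<close> by (intro divide_left_mono powr_mono2) auto
  ultimately have "y \<le> pres a A B \<Gamma> \<kappa> r"
    unfolding pres_def \<open>r / (1 - a * r) = q\<close> by linarith
  with \<open>\<rho>l \<le> r\<close> \<open>a * r < 1\<close> show ?thesis by (rule that)
qed

lemma rho_star_root:
  assumes "0 < a" "0 < A" "0 \<le> B" "0 < \<Gamma>" "0 \<le> \<kappa>" "0 < \<rho>l" "a * \<rho>l < 1" "\<upsilon>r < \<upsilon>l"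
  defines "rs \<equiv> rho_star a A B \<Gamma> \<kappa> \<rho>l \<upsilon>l \<upsilon>r"
  shows "\<rho>l < rs" and "a * rs < 1"
    and "pres a A B \<Gamma> \<kappa> rs = pres a A B \<Gamma> \<kappa> \<rho>l + (\<upsilon>l - \<upsilon>r)"
proof -
  let ?p = "pres a A B \<Gamma> \<kappa>"
  let ?P = "\<lambda>r. \<rho>l < r \<and> r < 1 / a \<and> \<upsilon>r = - ?p r + \<upsilon>l + ?p \<rho>l"
  obtain r1 where r1: "\<rho>l \<le> r1" "a * r1 < 1" "?p \<rho>l + (\<upsilon>l - \<upsilon>r) \<le> ?p r1"
    using ex_pres_ge assms by blast
  obtain r where r: "\<rho>l \<le> r" "r \<le> r1" "?p r = ?p \<rho>l + (\<upsilon>l - \<upsilon>r)"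
    using IVT'[of ?p \<rho>l "?p \<rho>l + (\<upsilon>l - \<upsilon>r)" r1] continuous_on_pres[of \<rho>l a r1 A B \<Gamma> \<kappa>] r1 assms
    by auto
  have "r \<noteq> \<rho>l"
    using r(3) assms by auto
  then have "?P r"
    using r mult_less_one_le_mono[of r r1 a] r1 assms by (auto simp: field_simps)
  moreover have "s = r" if "?P s" for s
    using that \<open>?P r\<close> pres_strict_mono[of A B \<Gamma> \<kappa> s r a] pres_strict_mono[of A B \<Gamma> \<kappa> r s a] assms
    by (cases s r rule: linorder_cases) (auto simp: field_simps)
  ultimately have "?P rs"
    unfolding rs_def rho_star_def by (rule theI)
  then show "\<rho>l < rs" "a * rs < 1" "?p rs = ?p \<rho>l + (\<upsilon>l - \<upsilon>r)"
    using assms by (auto simp: field_simps)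
qed

lemma sigma1_eq:
  assumes "0 < a" "0 < A" "0 \<le> B" "0 < \<Gamma>" "0 \<le> \<kappa>" "0 < \<rho>l" "a * \<rho>l < 1" "\<upsilon>r < \<upsilon>l"
  defines "rs \<equiv> rho_star a A B \<Gamma> \<kappa> \<rho>l \<upsilon>l \<upsilon>r"
  shows "sigma1 a A B \<Gamma> \<kappa> \<rho>l \<upsilon>l \<upsilon>r = \<upsilon>r - \<rho>l * (\<upsilon>l - \<upsilon>r) / (rs - \<rho>l)"
proof -
  have "sigma1 a A B \<Gamma> \<kappa> \<rho>l \<upsilon>l \<upsilon>r = \<upsilon>l - rs * (\<upsilon>l - \<upsilon>r) / (rs - \<rho>l)"
    using rho_star_root(3)[OF assms(1-8)] unfolding sigma1_def Let_def rs_def by simp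
  also have "\<dots> = \<upsilon>r - \<rho>l * (\<upsilon>l - \<upsilon>r) / (rs - \<rho>l)"
    using rho_star_root(1)[OF assms(1-8)] unfolding rs_def by (simp add: field_simps)
  finally show ?thesis .
qed

lemma rho_star_eq_sigma1:
  assumes "0 < a" "0 < A" "0 \<le> B" "0 < \<Gamma>" "0 \<le> \<kappa>" "0 < \<rho>l" "a * \<rho>l < 1" "\<upsilon>r < \<upsilon>l"
  shows "rho_star a A B \<Gamma> \<kappa> \<rho>l \<upsilon>l \<upsilon>r
           = \<rho>l + \<rho>l * (\<upsilon>l - \<upsilon>r) / (\<upsilon>r - sigma1 a A B \<Gamma> \<kappa> \<rho>l \<upsilon>l \<upsilon>r)"
proof -
  define rs where "rs = rho_star a A B \<Gamma> \<kappa> \<rho>l \<upsilon>l \<upsilon>r"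
  have "\<rho>l < rs" "0 < \<rho>l * (\<upsilon>l - \<upsilon>r)"
    using rho_star_root(1)[OF assms] assms unfolding rs_def by simp_all
  moreover have "\<upsilon>r - sigma1 a A B \<Gamma> \<kappa> \<rho>l \<upsilon>l \<upsilon>r = \<rho>l * (\<upsilon>l - \<upsilon>r) / (rs - \<rho>l)"
    using sigma1_eq[OF assms] unfolding rs_def by simp
  ultimately have "rs = \<rho>l + \<rho>l * (\<upsilon>l - \<upsilon>r) / (\<upsilon>r - sigma1 a A B \<Gamma> \<kappa> \<rho>l \<upsilon>l \<upsilon>r)"
    using assms(6,8) by simp
  then show ?thesis
    unfolding rs_def .
qed

lemma tendsto_pres_at_origin:
  assumes "0 < r"
  shows "((\<lambda>(a, A). pres a A B \<Gamma> \<kappa> r) \<longlongrightarrow> - B / r powr \<kappa>) (at (0, 0) within S)"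
proof -
  have "((\<lambda>z. snd z * (r / (1 - fst z * r)) powr \<Gamma> - B / r powr \<kappa>)
          \<longlongrightarrow> 0 * (r / (1 - 0 * r)) powr \<Gamma> - B / r powr \<kappa>) (at (0, 0) within S)"
    using tendsto_fst[OF tendsto_ident_at] tendsto_snd[OF tendsto_ident_at] assms
    by (intro tendsto_intros) auto
  then show ?thesis
    by (simp add: pres_def case_prod_beta')
qed

section \<open>Concentration of thin wedges on a line\<close>

lemma integrable_bounded_support:
  fixes g :: "real \<Rightarrow> real"
  assumes "g \<in> borel_measurable lborel" "\<And>x. \<bar>g x\<bar> \<le> K"
    and "\<And>x. g x \<noteq> 0 \<Longrightarrow> x \<in> {lo..hi}" "lo \<le> hi"
  shows "integrable lborel g" and "\<bar>LINT x|lborel. g x\<bar> \<le> K * (hi - lo)"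
proof -
  have bound: "norm (g x) \<le> K * indicator {lo..hi} x" for x
    using assms(2,3)[of x] by (cases "g x = 0") (auto simp: indicator_def)
  have majorant: "integrable lborel (\<lambda>x. K * indicator {lo..hi} x)"
    by (intro integrable_mult_right integrable_real_indicator) (auto simp: emeasure_lborel_Icc_eq)
  show "integrable lborel g"
    using bound
    by (intro Bochner_Integration.integrable_bound[OF majorant assms(1)] always_eventually allI) (auto intro: order_trans[OF _ abs_ge_self])
  then have "norm (LINT x|lborel. g x) \<le> (LINT x|lborel. K * indicator {lo..hi} x)"
    using majorant bound by (rule Bochner_Integration.integral_norm_bound_integral)
  then show "\<bar>LINT x|lborel. g x\<bar> \<le> K * (hi - lo)"
    using assms(4) by simp
qed

lemma set_integrable_bounded_support:
  fixes \<Phi> :: "real \<Rightarrow> real"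
  assumes "\<Phi> \<in> borel_measurable lborel" "\<And>t. 0 < t \<Longrightarrow> \<bar>\<Phi> t\<bar> \<le> K"
    and "\<And>t. R < t \<Longrightarrow> \<Phi> t = 0" "0 \<le> R"
  shows "set_integrable lborel {0<..} \<Phi>" and "\<bar>LINT t:{0<..}|lborel. \<Phi> t\<bar> \<le> K * R"
proof -
  have [measurable]: "\<Phi> \<in> borel_measurable lborel"
    by fact
  have "0 \<le> K"
    using assms(2)[of 1] by simp
  then have bounded: "\<bar>indicator {0<..} t * \<Phi> t\<bar> \<le> K" for t
    using assms(2)[of t] by (simp add: indicator_def)
  have supported: "t \<in> {0..R}" if "indicator {0<..} t * \<Phi> t \<noteq> 0" for t :: real
    using that assms(3)[of t] by (cases "R < t") (auto simp: indicator_def)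
  note integrable_bounded_support[of "\<lambda>t. indicator {0<..} t * \<Phi> t", OF _ bounded supported \<open>0 \<le> R\<close>]
  then show "set_integrable lborel {0<..} \<Phi>" "\<bar>LINT t:{0<..}|lborel. \<Phi> t\<bar> \<le> K * R"
    unfolding set_integrable_def set_lebesgue_integral_def by simp_all
qed

lemma set_integrable_iterated_bounded_support:
  fixes f :: "real \<times> real \<Rightarrow> real"
  assumes [measurable]: "f \<in> borel_measurable borel"
    and "\<And>z. \<bar>f z\<bar> \<le> K" "\<And>x t. f (x, t) \<noteq> 0 \<Longrightarrow> \<bar>x\<bar> \<le> R \<and> \<bar>t\<bar> \<le> R"
  shows "integrable lborel (\<lambda>x. f (x, t))"
    and "set_integrable lborel {0<..} (\<lambda>t. LINT x|lborel. f (x, t))"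
proof -
  define R' where "R' = max 0 R"
  have "0 \<le> R'" and supported: "\<And>x t. f (x, t) \<noteq> 0 \<Longrightarrow> x \<in> {- R'..R'} \<and> \<bar>t\<bar> \<le> R'"
    using assms(3) unfolding R'_def by force+
  have inner: "integrable lborel (\<lambda>x. f (x, t))" "\<bar>LINT x|lborel. f (x, t)\<bar> \<le> K * (R' - - R')" for t
    using integrable_bounded_support[of "\<lambda>x. f (x, t)" K "- R'" R', OF _ assms(2)] supported \<open>0 \<le> R'\<close>
    by auto
  show "integrable lborel (\<lambda>x. f (x, t))"
    by (fact inner(1))
  have "(\<lambda>t. LINT x|lborel. f (x, t)) \<in> borel_measurable lborel"
    by measurable
  moreover have "(LINT x|lborel. f (x, t)) = 0" if "R' < t" for t
  proof -
    have "f (x, t) = 0" for x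
      using supported[of x t] that by linarith
    then show ?thesis
      by simp
  qed
  ultimately show "set_integrable lborel {0<..} (\<lambda>t. LINT x|lborel. f (x, t))"
    using set_integrable_bounded_support(1)[of _ "K * (R' - - R')" R'] inner(2) \<open>0 \<le> R'\<close> by blast
qed

lemma uniformly_continuous_on_compact_support:
  fixes f :: "'a::heine_borel \<Rightarrow> 'b::real_normed_vector"
  assumes "continuous_on UNIV f" "compact (closure {x. f x \<noteq> 0})"
  shows "uniformly_continuous_on UNIV f"
proof -
  obtain c r where r: "closure {x. f x \<noteq> 0} \<subseteq> cball c r"
    using bounded_subset_cball[THEN iffD1, OF compact_imp_bounded[OF assms(2)]] by blast
  then have supported: "f x \<noteq> 0 \<Longrightarrow> x \<in> cball c r" for x
    using subset_trans[OF closure_subset r] by blast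
  have "uniformly_continuous_on (cball c (r + 1)) f"
    using compact_uniformly_continuous[OF continuous_on_subset[OF assms(1)] compact_cball] by simp
  show ?thesis
    unfolding uniformly_continuous_on_def
  proof (intro allI impI)
    fix e :: real assume "0 < e"
    then obtain d where "0 < d" and d: "\<And>x y. x \<in> cball c (r + 1) \<Longrightarrow> y \<in> cball c (r + 1)
        \<Longrightarrow> dist y x < d \<Longrightarrow> dist (f y) (f x) < e"
      using \<open>uniformly_continuous_on (cball c (r + 1)) f\<close> unfolding uniformly_continuous_on_def by metis
    have "dist (f y) (f x) < e" if "dist y x < min d 1" for x y
    proof (cases "f x = 0 \<and> f y = 0")
      case False
      then have "dist c x \<le> r \<or> dist c y \<le> r"
        using supported by auto
      moreover have "dist c y \<le> dist c x + dist y x" "dist c x \<le> dist c y + dist y x"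
        using dist_triangle[of c y x] dist_triangle[of c x y] by (simp_all add: dist_commute)
      ultimately have "x \<in> cball c (r + 1) \<and> y \<in> cball c (r + 1)"
        using that by auto
      then show ?thesis
        using d that by auto
    qed (use \<open>0 < e\<close> in simp)
    then show "\<exists>d>0. \<forall>x\<in>UNIV. \<forall>y\<in>UNIV. dist y x < d \<longrightarrow> dist (f y) (f x) < e"
      using \<open>0 < d\<close> by (intro exI[of _ "min d 1"]) auto
  qed
qed

lemma compact_support_bounds:
  fixes \<psi> :: "real \<times> real \<Rightarrow> real"
  assumes "continuous_on UNIV \<psi>" "compact (closure {z. \<psi> z \<noteq> 0})"
  obtains R M where "0 < R" "\<And>z. \<bar>\<psi> z\<bar> \<le> M"
    and "\<And>x t. \<psi> (x, t) \<noteq> 0 \<Longrightarrow> \<bar>x\<bar> \<le> R \<and> \<bar>t\<bar> \<le> R"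
proof -
  let ?S = "closure {z. \<psi> z \<noteq> 0}"
  obtain R where "0 < R" and R: "\<And>z. z \<in> ?S \<Longrightarrow> norm z \<le> R"
    using compact_imp_bounded[OF assms(2)] unfolding bounded_pos by auto
  obtain M where M: "\<And>z. z \<in> ?S \<Longrightarrow> \<bar>\<psi> z\<bar> \<le> M"
    using compact_imp_bounded[OF compact_continuous_image[OF continuous_on_subset[OF assms(1)] assms(2)]]
    unfolding bounded_iff by auto
  have "\<bar>\<psi> z\<bar> \<le> max M 0" for z
    using M[of z] closure_subset[of "{z. \<psi> z \<noteq> 0}"] by (cases "\<psi> z = 0") auto
  moreover have "\<bar>x\<bar> \<le> R \<and> \<bar>t\<bar> \<le> R" if "\<psi> (x, t) \<noteq> 0" for x t
  proof -
    have "norm (x, t) \<le> R"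
      using that by (intro R subsetD[OF closure_subset]) simp
    then show ?thesis
      using norm_fst_le[of x t] norm_snd_le[of t x] by simp
  qed
  ultimately show ?thesis
    using \<open>0 < R\<close> that by blast
qed

lemma interval_integral_close_to_const:
  fixes f :: "real \<Rightarrow> real"
  assumes [measurable]: "f \<in> borel_measurable lborel"
    and "lo < hi" "\<And>x. lo \<le> x \<Longrightarrow> x < hi \<Longrightarrow> \<bar>f x - y\<bar> \<le> \<epsilon>"
  shows "\<bar>(LINT x|lborel. indicator {lo..<hi} x * f x) - (hi - lo) * y\<bar> \<le> \<epsilon> * (hi - lo)"
proof -
  let ?g = "\<lambda>x. indicator {lo..<hi} x * (f x - y)"
  have "0 \<le> \<epsilon>"
    using assms(2) assms(3)[of lo] by auto
  then have bounded: "\<bar>?g x\<bar> \<le> \<epsilon>" for x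
    using assms(3)[of x] by (simp add: indicator_def)
  have supported: "?g x \<noteq> 0 \<Longrightarrow> x \<in> {lo..hi}" for x
    by (simp add: indicator_def split: if_splits)
  have "?g \<in> borel_measurable lborel"
    by measurable
  note g = integrable_bounded_support[OF this bounded supported less_imp_le[OF \<open>lo < hi\<close>]]
  have "integrable lborel (\<lambda>x. indicator {lo..<hi} x * y)"
    using \<open>lo < hi\<close> by (intro integrable_mult_left integrable_real_indicator) auto
  moreover have "indicator {lo..<hi} x * f x = ?g x + indicator {lo..<hi} x * y" for x
    by (simp add: algebra_simps)
  ultimately have "(LINT x|lborel. indicator {lo..<hi} x * f x) = (LINT x|lborel. ?g x) + (hi - lo) * y"
    using g(1) \<open>lo < hi\<close> by simp
  with g(2) show ?thesis
    by simp
qed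

lemma set_integrable_iterated_mult_compact_support:
  fixes \<psi> g :: "real \<times> real \<Rightarrow> real"
  assumes "continuous_on UNIV \<psi>" "compact (closure {z. \<psi> z \<noteq> 0})"
    and "g \<in> borel_measurable borel" "\<And>z. \<bar>g z\<bar> \<le> K"
  shows "integrable lborel (\<lambda>x. g (x, t) * \<psi> (x, t))"
    and "set_integrable lborel {0<..} (\<lambda>t. LINT x|lborel. g (x, t) * \<psi> (x, t))"
proof -
  obtain R M where M: "\<And>z. \<bar>\<psi> z\<bar> \<le> M"
    and R: "\<And>x t. \<psi> (x, t) \<noteq> 0 \<Longrightarrow> \<bar>x\<bar> \<le> R \<and> \<bar>t\<bar> \<le> R"
    using compact_support_bounds[OF assms(1,2)] by metis
  have measurable: "(\<lambda>z. g z * \<psi> z) \<in> borel_measurable borel"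
    using assms(3) borel_measurable_continuous_onI[OF assms(1)] by measurable
  have bounded: "\<bar>g z * \<psi> z\<bar> \<le> K * M" for z
    using assms(4)[of z] M[of z] by (simp add: abs_mult mult_mono')
  have supported: "g (x, t) * \<psi> (x, t) \<noteq> 0 \<Longrightarrow> \<bar>x\<bar> \<le> R \<and> \<bar>t\<bar> \<le> R" for x t
    using R[of x t] by simp
  show "integrable lborel (\<lambda>x. g (x, t) * \<psi> (x, t))"
    and "set_integrable lborel {0<..} (\<lambda>t. LINT x|lborel. g (x, t) * \<psi> (x, t))"
    using set_integrable_iterated_bounded_support[OF measurable bounded supported] by simp_all
qed

lemma set_integrable_wedge:
  fixes \<psi> :: "real \<times> real \<Rightarrow> real"
  assumes "continuous_on UNIV \<psi>" "compact (closure {z. \<psi> z \<noteq> 0})"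
  shows "integrable lborel (\<lambda>x. indicator {c * t - \<delta> * t..<c * t} x * \<psi> (x, t))"
    and "set_integrable lborel {0<..}
           (\<lambda>t. LINT x|lborel. indicator {c * t - \<delta> * t..<c * t} x * \<psi> (x, t))"
proof -
  let ?g = "\<lambda>(x, t). indicator {c * t - \<delta> * t..<c * t} x :: real"
  have "?g \<in> borel_measurable borel"
    unfolding indicator_def atLeastLessThan_iff borel_prod[symmetric] by measurable
  moreover have "\<bar>?g z\<bar> \<le> 1" for z
    by (cases z) (simp add: indicator_def)
  ultimately show "integrable lborel (\<lambda>x. indicator {c * t - \<delta> * t..<c * t} x * \<psi> (x, t))"
    and "set_integrable lborel {0<..}
           (\<lambda>t. LINT x|lborel. indicator {c * t - \<delta> * t..<c * t} x * \<psi> (x, t))"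
    using set_integrable_iterated_mult_compact_support[OF assms, of ?g 1] by simp_all
qed

lemma wedge_average_error:
  fixes \<psi> :: "real \<times> real \<Rightarrow> real"
  assumes "continuous_on UNIV \<psi>" "compact (closure {z. \<psi> z \<noteq> 0})"
    and "0 < \<delta>" "0 < R" and R: "\<And>x t. \<psi> (x, t) \<noteq> 0 \<Longrightarrow> \<bar>t\<bar> \<le> R"
    and near: "\<And>x t. 0 < t \<Longrightarrow> t \<le> R \<Longrightarrow> c * t - \<delta> * t \<le> x \<Longrightarrow> x < c * t
                 \<Longrightarrow> \<bar>\<psi> (x, t) - \<psi> (c * t, t)\<bar> \<le> \<epsilon>"
  shows "\<bar>(LINT t:{0<..}|lborel. LINT x|lborel. indicator {c * t - \<delta> * t..<c * t} x * \<psi> (x, t)) / \<delta>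
           - (LINT t:{0<..}|lborel. t * \<psi> (c * t, t))\<bar> \<le> \<epsilon> * R * R"
proof -
  obtain M where M: "\<And>z. \<bar>\<psi> z\<bar> \<le> M"
    using compact_support_bounds[OF assms(1,2)] by metis
  have [measurable]: "\<psi> \<in> borel_measurable borel"
    using assms(1) by (rule borel_measurable_continuous_onI)
  define F where "F t = (LINT x|lborel. indicator {c * t - \<delta> * t..<c * t} x * \<psi> (x, t))" for t
  define G where "G t = t * \<psi> (c * t, t)" for t
  have "0 \<le> \<epsilon>"
    using near[of R "c * R - \<delta> * R"] \<open>0 < \<delta>\<close> \<open>0 < R\<close> by simp
  have vanish: "F t = 0" "G t = 0" if "R < t" for t
  proof -
    have "\<psi> (x, t) = 0" for x
      using R[of x t] that by linarith
    then show "F t = 0" "G t = 0"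
      unfolding F_def G_def by simp_all
  qed
  have F_int: "set_integrable lborel {0<..} F"
    unfolding F_def using set_integrable_wedge(2)[OF assms(1,2)] .
  have "\<bar>G t\<bar> \<le> R * M" if "0 < t" for t
    using vanish(2)[of t] M[of "(c * t, t)"] \<open>0 < R\<close> that
    by (cases "t \<le> R") (auto simp: G_def abs_mult intro: mult_mono)
  moreover have "G \<in> borel_measurable borel"
    unfolding G_def by measurable
  ultimately have G_int: "set_integrable lborel {0<..} G"
    using set_integrable_bounded_support(1)[of G "R * M" R] vanish(2) \<open>0 < R\<close> by simp
  have "\<bar>F t / \<delta> - G t\<bar> \<le> \<epsilon> * R" if "0 < t" for t
  proof (cases "t \<le> R")
    case True
    have "\<bar>F t - (c * t - (c * t - \<delta> * t)) * \<psi> (c * t, t)\<bar> \<le> \<epsilon> * (c * t - (c * t - \<delta> * t))"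
      unfolding F_def using near \<open>0 < t\<close> True \<open>0 < \<delta>\<close> by (intro interval_integral_close_to_const) auto
    then have "\<bar>F t - \<delta> * G t\<bar> \<le> (\<epsilon> * t) * \<delta>"
      by (simp add: G_def algebra_simps)
    moreover have "F t / \<delta> - G t = (F t - \<delta> * G t) / \<delta>"
      using \<open>0 < \<delta>\<close> by (simp add: diff_divide_distrib)
    ultimately have "\<bar>F t / \<delta> - G t\<bar> \<le> \<epsilon> * t"
      using \<open>0 < \<delta>\<close> by (simp add: abs_divide pos_divide_le_eq)
    also have "\<dots> \<le> \<epsilon> * R"
      using True \<open>0 \<le> \<epsilon>\<close> by (simp add: mult_left_mono)
    finally show ?thesis .
  qed (use vanish \<open>0 \<le> \<epsilon>\<close> \<open>0 < R\<close> in simp)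
  moreover have "(\<lambda>t. F t / \<delta> - G t) \<in> borel_measurable lborel"
    unfolding F_def G_def indicator_def atLeastLessThan_iff by measurable
  ultimately have "\<bar>LINT t:{0<..}|lborel. F t / \<delta> - G t\<bar> \<le> \<epsilon> * R * R"
    using set_integrable_bounded_support(2)[of "\<lambda>t. F t / \<delta> - G t" "\<epsilon> * R" R] vanish \<open>0 < R\<close>
    by simp
  then show ?thesis
    using F_int G_int unfolding F_def G_def by simp
qed

lemma tendsto_wedge_average:
  fixes \<psi> :: "real \<times> real \<Rightarrow> real"
  assumes "continuous_on UNIV \<psi>" "compact (closure {z. \<psi> z \<noteq> 0})"
  shows "((\<lambda>\<delta>. (LINT t:{0<..}|lborel. LINT x|lborel. indicator {c * t - \<delta> * t..<c * t} x * \<psi> (x, t)) / \<delta>)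
          \<longlongrightarrow> (LINT t:{0<..}|lborel. t * \<psi> (c * t, t))) (at_right 0)"
  unfolding tendsto_iff dist_real_def
proof (intro allI impI)
  fix e :: real assume "0 < e"
  obtain R where "0 < R" and R: "\<And>x t. \<psi> (x, t) \<noteq> 0 \<Longrightarrow> \<bar>x\<bar> \<le> R \<and> \<bar>t\<bar> \<le> R"
    using compact_support_bounds[OF assms] by metis
  define \<epsilon> where "\<epsilon> = e / (2 * R * R)"
  have "0 < \<epsilon>" "\<epsilon> * R * R < e"
    using \<open>0 < e\<close> \<open>0 < R\<close> by (simp_all add: \<epsilon>_def field_simps)
  obtain d where "0 < d" and d: "\<And>p q. dist q p < d \<Longrightarrow> dist (\<psi> q) (\<psi> p) < \<epsilon>"
    using uniformly_continuous_on_compact_support[OF assms] \<open>0 < \<epsilon>\<close>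
    unfolding uniformly_continuous_on_def by blast
  have "\<bar>\<psi> (x, t) - \<psi> (c * t, t)\<bar> \<le> \<epsilon>"
    if "\<delta> \<in> {0<..<d / R}" "t \<le> R" "c * t - \<delta> * t \<le> x" "x < c * t" for \<delta> t x
  proof -
    have "\<delta> * t \<le> \<delta> * R"
      using that by (simp add: mult_left_mono)
    also have "\<dots> < d"
      using that \<open>0 < R\<close> by (simp add: field_simps)
    finally have "dist (x, t) (c * t, t) < d"
      using that by (simp add: dist_Pair_Pair dist_real_def)
    then show ?thesis
      using d[of "(x, t)" "(c * t, t)"] by (simp add: dist_real_def)
  qed
  then have "\<bar>(LINT t:{0<..}|lborel. LINT x|lborel. indicator {c * t - \<delta> * t..<c * t} x * \<psi> (x, t)) / \<delta>
      - (LINT t:{0<..}|lborel. t * \<psi> (c * t, t))\<bar> < e" if "\<delta> \<in> {0<..<d / R}" for \<delta>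
    using wedge_average_error[OF assms _ \<open>0 < R\<close>, of \<delta> c \<epsilon>] R that \<open>\<epsilon> * R * R < e\<close> by fastforce
  moreover have "eventually (\<lambda>\<delta>. \<delta> \<in> {0<..<d / R}) (at_right 0)"
    using \<open>0 < d\<close> \<open>0 < R\<close> by (intro eventually_at_right_real) simp
  ultimately show "eventually (\<lambda>\<delta>. \<bar>(LINT t:{0<..}|lborel. LINT x|lborel.
      indicator {c * t - \<delta> * t..<c * t} x * \<psi> (x, t)) / \<delta> - (LINT t:{0<..}|lborel. t * \<psi> (c * t, t))\<bar> < e)
      (at_right 0)"
    by (auto elim: eventually_mono)
qed

lemma integral_contact_profile_split:
  fixes \<psi> :: "real \<times> real \<Rightarrow> real"
  assumes "continuous_on UNIV \<psi>" "compact (closure {z. \<psi> z \<noteq> 0})" "0 < \<delta>"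
  shows "(LINT t:{0<..}|lborel. LINT x|lborel.
            (if x / t < c - \<delta> then \<rho>l else if x / t < c then \<rho>m else \<rho>r) * \<psi> (x, t))
       = (LINT t:{0<..}|lborel. LINT x|lborel. (if x - c * t < 0 then \<rho>l else \<rho>r) * \<psi> (x, t))
         + (\<rho>m - \<rho>l) * (LINT t:{0<..}|lborel. LINT x|lborel. indicator {c * t - \<delta> * t..<c * t} x * \<psi> (x, t))"
proof -
  let ?P = "\<lambda>x t. (if x / t < c - \<delta> then \<rho>l else if x / t < c then \<rho>m else \<rho>r) * \<psi> (x, t)"
  let ?H = "\<lambda>x t. (if x - c * t < 0 then \<rho>l else \<rho>r) * \<psi> (x, t)"
  let ?V = "\<lambda>x t. indicator {c * t - \<delta> * t..<c * t} x * \<psi> (x, t)"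
  let ?h = "\<lambda>(x, t). if x - c * t < 0 then \<rho>l else \<rho>r"
  have h_measurable: "?h \<in> borel_measurable borel"
    unfolding borel_prod[symmetric] by measurable
  have h_bounded: "\<bar>?h z\<bar> \<le> \<bar>\<rho>l\<bar> + \<bar>\<rho>r\<bar>" for z
    by (cases z) auto
  note H_int = set_integrable_iterated_mult_compact_support[OF assms(1,2) h_measurable h_bounded, simplified]
  note V_int = set_integrable_wedge[OF assms(1,2), where c = c and \<delta> = \<delta>]
  have "?P x t = ?H x t + (\<rho>m - \<rho>l) * ?V x t" if "0 < t" for x t
  proof -
    have "x / t < c - \<delta> \<longleftrightarrow> x < c * t - \<delta> * t" "x / t < c \<longleftrightarrow> x < c * t"
      using that by (simp_all add: field_simps)
    then show ?thesis
      using that \<open>0 < \<delta>\<close> by (auto simp: indicator_def algebra_simps)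
  qed
  then have "(LINT x|lborel. ?P x t) = (LINT x|lborel. ?H x t) + (\<rho>m - \<rho>l) * (LINT x|lborel. ?V x t)"
    if "0 < t" for t
    using that H_int(1) V_int(1) by simp
  then have "(LINT t:{0<..}|lborel. LINT x|lborel. ?P x t)
      = (LINT t:{0<..}|lborel. (LINT x|lborel. ?H x t) + (\<rho>m - \<rho>l) * (LINT x|lborel. ?V x t))"
    by (intro set_lebesgue_integral_cong) auto
  also have "\<dots> = (LINT t:{0<..}|lborel. LINT x|lborel. ?H x t)
      + (\<rho>m - \<rho>l) * (LINT t:{0<..}|lborel. LINT x|lborel. ?V x t)"
    using H_int(2) V_int(2) by simp
  finally show ?thesis .
qed

lemma tendsto_concentrating_profile:
  fixes \<psi> :: "real \<times> real \<Rightarrow> real" and \<delta> :: "'a \<Rightarrow> real"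
  assumes "continuous_on UNIV \<psi>" "compact (closure {z. \<psi> z \<noteq> 0})" "filterlim \<delta> (at_right 0) F"
  shows "((\<lambda>z. LINT t:{0<..}|lborel. LINT x|lborel.
            (if x / t < c - \<delta> z then \<rho>l else if x / t < c then \<rho>l + W / \<delta> z else \<rho>r) * \<psi> (x, t))
          \<longlongrightarrow> (LINT t:{0<..}|lborel. W * t * \<psi> (c * t, t))
              + (LINT t:{0<..}|lborel. LINT x|lborel. (if x - c * t < 0 then \<rho>l else \<rho>r) * \<psi> (x, t))) F"
proof -
  define I where "I \<delta> = (LINT t:{0<..}|lborel. LINT x|lborel. indicator {c * t - \<delta> * t..<c * t} x * \<psi> (x, t))"
    for \<delta>
  define J where "J = (LINT t:{0<..}|lborel. LINT x|lborel. (if x - c * t < 0 then \<rho>l else \<rho>r) * \<psi> (x, t))"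
  have "eventually (\<lambda>z. 0 < \<delta> z) F"
    using assms(3) unfolding filterlim_at by (auto elim: eventually_mono)
  then have "eventually (\<lambda>z. J + W * (I (\<delta> z) / \<delta> z) = (LINT t:{0<..}|lborel. LINT x|lborel.
            (if x / t < c - \<delta> z then \<rho>l else if x / t < c then \<rho>l + W / \<delta> z else \<rho>r) * \<psi> (x, t))) F"
    by eventually_elim (simp add: integral_contact_profile_split[OF assms(1,2)] I_def J_def)
  moreover have "((\<lambda>z. J + W * (I (\<delta> z) / \<delta> z)) \<longlongrightarrow> J + W * (LINT t:{0<..}|lborel. t * \<psi> (c * t, t))) F"
    unfolding I_def by (intro tendsto_intros filterlim_compose[OF tendsto_wedge_average[OF assms(1,2)] assms(3)])
  moreover have "(LINT t:{0<..}|lborel. W * t * \<psi> (c * t, t)) = W * (LINT t:{0<..}|lborel. t * \<psi> (c * t, t))"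
    by (simp add: mult.assoc)
  ultimately show ?thesis
    unfolding J_def by (auto intro: Lim_transform_eventually simp: add.commute)
qed

section \<open>The limit of vanishing a and A\<close>

locale riemann_data =
  fixes B \<Gamma> \<kappa> \<rho>l \<upsilon>l \<upsilon>r :: real and S :: "(real \<times> real) set"
  assumes B_pos: "0 < B" and \<Gamma>_pos: "0 < \<Gamma>" and \<kappa>_nonneg: "0 \<le> \<kappa>" and \<rho>l_pos: "0 < \<rho>l"
    and strong_jump: "\<upsilon>r \<le> \<upsilon>l - B / \<rho>l powr \<kappa>"
    and admissible: "S \<subseteq> {(a, A). 0 < a \<and> 0 < A \<and> a * \<rho>l < 1}"
begin

lemma velocity_decreases: "\<upsilon>r < \<upsilon>l"
proof -
  have "0 < B / \<rho>l powr \<kappa>"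
    using B_pos \<rho>l_pos by simp
  then show ?thesis
    using strong_jump by linarith
qed

lemma admissibleD:
  assumes "(a, A) \<in> S"
  shows "0 < a" "0 < A" "0 \<le> B" "0 < \<Gamma>" "0 \<le> \<kappa>" "0 < \<rho>l" "a * \<rho>l < 1" "\<upsilon>r < \<upsilon>l"
  using assms admissible B_pos \<Gamma>_pos \<kappa>_nonneg \<rho>l_pos velocity_decreases by auto

lemma eventually_in_S: "eventually (\<lambda>z. z \<in> S) (at (0, 0) within S)"
  by (simp add: eventually_at_filter)

lemma rho_star_tendsto_at_top:
  "filterlim (\<lambda>(a, A). rho_star a A B \<Gamma> \<kappa> \<rho>l \<upsilon>l \<upsilon>r) at_top (at (0, 0) within S)"
  unfolding filterlim_at_top
proof
  fix M :: real
  let ?F = "at (0, 0) within S"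
  define m where "m = max M \<rho>l"
  have "0 < m" "M \<le> m"
    using \<rho>l_pos unfolding m_def by auto
  have "eventually (\<lambda>z. (case z of (a, A) \<Rightarrow> pres a A B \<Gamma> \<kappa> m) < 0) ?F"
    using order_tendstoD(2)[OF tendsto_pres_at_origin[OF \<open>0 < m\<close>, of B \<Gamma> \<kappa> S], of 0] B_pos \<open>0 < m\<close>
    by simp
  moreover have "((\<lambda>z. fst z * m) \<longlongrightarrow> 0 * m) ?F"
    using tendsto_fst[OF tendsto_ident_at] by (intro tendsto_intros) auto
  then have "eventually (\<lambda>z. fst z * m < 1) ?F"
    by (auto dest: order_tendstoD(2)[where a = 1])
  ultimately show
    "eventually (\<lambda>z. M \<le> (case z of (a, A) \<Rightarrow> rho_star a A B \<Gamma> \<kappa> \<rho>l \<upsilon>l \<upsilon>r)) ?F"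
    using eventually_in_S
  proof eventually_elim
    case (elim z)
    then obtain a A where z: "z = (a, A)" "(a, A) \<in> S" "pres a A B \<Gamma> \<kappa> m < 0" "a * m < 1"
      by (cases z) auto
    define rs where "rs = rho_star a A B \<Gamma> \<kappa> \<rho>l \<upsilon>l \<upsilon>r"
    note rs = rho_star_root[OF admissibleD[OF z(2)], folded rs_def]
    have "0 \<le> A * (\<rho>l / (1 - a * \<rho>l)) powr \<Gamma>"
      using admissibleD[OF z(2)] by simp
    \<comment> \<open>This is where the strong jump condition enters.\<close>
    then have "0 \<le> pres a A B \<Gamma> \<kappa> rs"
      using rs(3) strong_jump unfolding pres_def by linarith
    moreover have "pres a A B \<Gamma> \<kappa> rs < pres a A B \<Gamma> \<kappa> m" if "rs < m"
      using pres_strict_mono[of A B \<Gamma> \<kappa> rs m a] that rs z admissibleD[OF z(2)] by auto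
    ultimately have "m \<le> rs"
      using z(3) by force
    with \<open>M \<le> m\<close> show ?case
      unfolding z rs_def by simp
  qed
qed

lemma filterlim_shock_gap:
  "filterlim (\<lambda>(a, A). \<upsilon>r - sigma1 a A B \<Gamma> \<kappa> \<rho>l \<upsilon>l \<upsilon>r) (at_right 0) (at (0, 0) within S)"
proof -
  let ?F = "at (0, 0) within S"
  define g where "g = (\<lambda>(a, A). \<rho>l * (\<upsilon>l - \<upsilon>r) / (rho_star a A B \<Gamma> \<kappa> \<rho>l \<upsilon>l \<upsilon>r - \<rho>l))"
  have "(\<upsilon>r - sigma1 a A B \<Gamma> \<kappa> \<rho>l \<upsilon>l \<upsilon>r) = g (a, A)" "0 < g (a, A)" if "(a, A) \<in> S" for a A
    using sigma1_eq[OF admissibleD[OF that]] rho_star_root(1)[OF admissibleD[OF that]]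
      \<rho>l_pos velocity_decreases unfolding g_def by auto
  then have eq:
      "eventually (\<lambda>z. (case z of (a, A) \<Rightarrow> \<upsilon>r - sigma1 a A B \<Gamma> \<kappa> \<rho>l \<upsilon>l \<upsilon>r) = g z) ?F"
    and pos: "eventually (\<lambda>z. 0 < g z) ?F"
    using eventually_in_S by (auto elim!: eventually_mono)
  have "filterlim (\<lambda>(a, A). rho_star a A B \<Gamma> \<kappa> \<rho>l \<upsilon>l \<upsilon>r - \<rho>l) at_top ?F"
    using filterlim_tendsto_add_at_top[OF tendsto_const[of "- \<rho>l"] rho_star_tendsto_at_top]
    by (simp add: case_prod_beta' add.commute)
  then have "(g \<longlongrightarrow> 0) ?F"
    unfolding g_def case_prod_beta'
    by (intro tendsto_divide_0[OF tendsto_const] filterlim_at_top_imp_at_infinity) simp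
  then have "filterlim g (at_right 0) ?F"
    using pos by (rule tendsto_imp_filterlim_at_right)
  then show ?thesis
    using filterlim_cong[OF refl refl eq] by simp
qed

lemma tendsto_v_sol:
  assumes "0 < t"
  shows "((\<lambda>(a, A). v_sol a A B \<Gamma> \<kappa> \<rho>l \<upsilon>l \<upsilon>r (x / t))
           \<longlongrightarrow> (if x < \<upsilon>r * t then \<upsilon>l else \<upsilon>r)) (at (0, 0) within S)"
proof -
  let ?F = "at (0, 0) within S"
  let ?\<sigma> = "\<lambda>(a, A). sigma1 a A B \<Gamma> \<kappa> \<rho>l \<upsilon>l \<upsilon>r"
  have gap: "filterlim (\<lambda>z. \<upsilon>r - ?\<sigma> z) (at_right 0) ?F"
    using filterlim_shock_gap by (simp add: case_prod_beta')
  then have below: "eventually (\<lambda>z. ?\<sigma> z < \<upsilon>r) ?F"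
    unfolding filterlim_at by (auto elim: eventually_mono)
  have "((\<lambda>z. \<upsilon>r - (\<upsilon>r - ?\<sigma> z)) \<longlongrightarrow> \<upsilon>r - 0) ?F"
    using gap unfolding filterlim_at by (intro tendsto_intros) auto
  then have "(?\<sigma> \<longlongrightarrow> \<upsilon>r) ?F"
    by simp
  have "eventually (\<lambda>z. (case z of (a, A) \<Rightarrow> v_sol a A B \<Gamma> \<kappa> \<rho>l \<upsilon>l \<upsilon>r (x / t))
      = (if x < \<upsilon>r * t then \<upsilon>l else \<upsilon>r)) ?F"
  proof (cases "x < \<upsilon>r * t")
    case True
    then have "x / t < \<upsilon>r"
      using \<open>0 < t\<close> by (simp add: field_simps)
    with \<open>(?\<sigma> \<longlongrightarrow> \<upsilon>r) ?F\<close> have "eventually (\<lambda>z. x / t < ?\<sigma> z) ?F"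
      by (rule order_tendstoD(1))
    then show ?thesis
      by eventually_elim (use True in \<open>auto simp: v_sol_def\<close>)
  next
    case False
    then have "\<upsilon>r \<le> x / t"
      using \<open>0 < t\<close> by (simp add: field_simps)
    from below show ?thesis
      by eventually_elim (use False \<open>\<upsilon>r \<le> x / t\<close> in \<open>auto simp: v_sol_def\<close>)
  qed
  then show ?thesis
    by (rule tendsto_eventually)
qed

lemma tendsto_rho_sol:
  fixes \<psi> :: "real \<times> real \<Rightarrow> real"
  assumes "continuous_on UNIV \<psi>" "compact (closure {z. \<psi> z \<noteq> 0})"
  shows "((\<lambda>(a, A). LINT t:{0<..}|lborel. LINT x|lborel.
             rho_sol a A B \<Gamma> \<kappa> \<rho>l \<upsilon>l \<rho>r \<upsilon>r (x / t) * \<psi> (x, t))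
          \<longlongrightarrow> (LINT t:{0<..}|lborel. \<rho>l * (\<upsilon>l - \<upsilon>r) * t * \<psi> (\<upsilon>r * t, t))
              + (LINT t:{0<..}|lborel. LINT x|lborel.
                   (if x - \<upsilon>r * t < 0 then \<rho>l else \<rho>r) * \<psi> (x, t))) (at (0, 0) within S)"
proof -
  define W where "W = \<rho>l * (\<upsilon>l - \<upsilon>r)"
  define \<delta> where "\<delta> = (\<lambda>(a, A). \<upsilon>r - sigma1 a A B \<Gamma> \<kappa> \<rho>l \<upsilon>l \<upsilon>r)"
  have "rho_sol a A B \<Gamma> \<kappa> \<rho>l \<upsilon>l \<rho>r \<upsilon>r
      = (\<lambda>\<zeta>. if \<zeta> < \<upsilon>r - \<delta> (a, A) then \<rho>l
               else if \<zeta> < \<upsilon>r then \<rho>l + W / \<delta> (a, A) else \<rho>r)"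
    if "(a, A) \<in> S" for a A
    using rho_star_eq_sigma1[OF admissibleD[OF that]] unfolding \<delta>_def W_def
    by (intro ext) (simp add: rho_sol_def)
  then have "eventually (\<lambda>z. (LINT t:{0<..}|lborel. LINT x|lborel.
      (if x / t < \<upsilon>r - \<delta> z then \<rho>l else if x / t < \<upsilon>r then \<rho>l + W / \<delta> z else \<rho>r) * \<psi> (x, t))
      = (case z of (a, A) \<Rightarrow> LINT t:{0<..}|lborel. LINT x|lborel.
             rho_sol a A B \<Gamma> \<kappa> \<rho>l \<upsilon>l \<rho>r \<upsilon>r (x / t) * \<psi> (x, t))) (at (0, 0) within S)"
    using eventually_in_S by (auto elim!: eventually_mono)
  moreover have "filterlim \<delta> (at_right 0) (at (0, 0) within S)"
    unfolding \<delta>_def by (rule filterlim_shock_gap)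
  ultimately show ?thesis
    using tendsto_concentrating_profile[OF assms, of \<delta>] Lim_transform_eventually unfolding W_def by blast
qed

end

theorem theorem3p1:
  fixes B \<Gamma> \<kappa> \<rho>l \<rho>r \<upsilon>l \<upsilon>r :: real
  assumes "B > 0" and "1 \<le> \<Gamma>" and "\<Gamma> \<le> 3" and "0 < \<kappa>" and "\<kappa> \<le> 1"
    and "\<rho>l > 0" and "\<rho>r > 0" and "\<upsilon>l \<ge> 0" and "\<upsilon>r \<ge> 0"
    and "\<upsilon>r \<le> \<upsilon>l - B / \<rho>l powr \<kappa>"
  shows
    "(\<forall>x t. t > 0 \<longrightarrow>
       ((\<lambda>(a, A). v_sol a A B \<Gamma> \<kappa> \<rho>l \<upsilon>l \<upsilon>r (x / t))
          \<longlongrightarrow> (if x < \<upsilon>r * t then \<upsilon>l else \<upsilon>r))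
       (at (0, 0) within {(a, A). 0 < a \<and> 0 < A \<and> a * max \<rho>l \<rho>r < 1}))
   \<and> (\<forall>\<psi>. test_fun \<psi> \<longrightarrow>
       ((\<lambda>(a, A). LINT t:{0<..}|lborel. LINT x|lborel.
            rho_sol a A B \<Gamma> \<kappa> \<rho>l \<upsilon>l \<rho>r \<upsilon>r (x / t) * \<psi> (x, t))
          \<longlongrightarrow> (LINT t:{0<..}|lborel. \<rho>l * (\<upsilon>l - \<upsilon>r) * t * \<psi> (\<upsilon>r * t, t))
              + (LINT t:{0<..}|lborel. LINT x|lborel.
                   (if x - \<upsilon>r * t < 0 then \<rho>l else \<rho>r) * \<psi> (x, t)))
       (at (0, 0) within {(a, A). 0 < a \<and> 0 < A \<and> a * max \<rho>l \<rho>r < 1}))"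
proof -
  interpret riemann_data B \<Gamma> \<kappa> \<rho>l \<upsilon>l \<upsilon>r "{(a, A). 0 < a \<and> 0 < A \<and> a * max \<rho>l \<rho>r < 1}"
    using assms by unfold_locales (auto intro: mult_less_one_le_mono[of \<rho>l "max \<rho>l \<rho>r"])
  have "continuous_on UNIV \<psi>" "compact (closure {z. \<psi> z \<noteq> 0})" if "test_fun \<psi>" for \<psi>
    using that unfolding test_fun_def smooth2_def by (metis Ck2.simps(1))+
  then show ?thesis
    using tendsto_v_sol tendsto_rho_sol by blast
qed

end
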